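(* A bag generation process $P(s\mid y,x)$ is reconstructible if and only if, for every $x\in\mathcal{X}$, the vectors $\mathbf{p}_{1,x},\mathbf{p}_{2,x},\dots,\mathbf{p}_{|\mathcal{Y}|,x}\in\mathbb{R}^{|\mathcal{S}|}$ are linearly independent.
   Context: Let $\mathcal{X}$ be an instance space, $\mathcal{Y}=\{1,\dots,c\}$ a finite label set, and $\mathcal{S}=2^{\mathcal{Y}}=\{s_1,\dots,s_{|\mathcal{S}|}\}$ the set of bags of labels. A bag generation process is a family of conditional probability distributions $P(\cdot\mid y,x)$ on $\mathcal{S}$, one for each $y\in\mathcal{Y}$, $x\in\mathcal{X}$. For $i\in\mathcal{Y}$ and $x\in\mathcal{X}$ let $\mathbf{p}_{i,x}=(P(s_1\mid i,x),P(s_2\mid i,x),\dots,P(s_{|\mathcal{S}|}\mid i,x))^\top\in\mathbb{R}^{|\mathcal{S}|}$. Let $\Delta(\mathcal{Y})$ denote the set of probability distributions on $\mathcal{Y}$. The bag generation process is called reconstructible if for every $x\in\mathcal{X}$ and all $Q_1,Q_2\in\Delta(\mathcal{Y})$, the equality $\sum_{y\in\mathcal{Y}}P(s\mid y,x)Q_1(y)=\sum_{y\in\mathcal{Y}}P(s\mid y,x)Q_2(y)$ for all $s\in\mathcal{S}$ implies $\arg\max_{y\in\mathcal{Y}}Q_1(y)=\arg\max_{y\in\mathcal{Y}}Q_2(y)$ (equality of sets). *)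

theory Defs
  imports Main "HOL-Analysis.Analysis"
begin

text \<open>Labels: a finite type 'y (so Y = UNIV, |Y| = CARD('y)); bags: 'y set (S = 2^Y = UNIV).
  Instances: an arbitrary type 'x.  P y x s stands for P(s | y, x).\<close>

definition is_distribution :: "('a::finite \<Rightarrow> real) \<Rightarrow> bool" where
  "is_distribution Q \<longleftrightarrow> (\<forall>a. 0 \<le> Q a) \<and> (\<Sum>a\<in>UNIV. Q a) = 1"

definition bag_generation_process :: "('y::finite \<Rightarrow> 'x \<Rightarrow> 'y set \<Rightarrow> real) \<Rightarrow> bool" where
  "bag_generation_process P \<longleftrightarrow> (\<forall>y x. is_distribution (\<lambda>s. P y x s))"

definition argmax_set :: "('y \<Rightarrow> real) \<Rightarrow> 'y set" where
  "argmax_set Q = {y. \<forall>y'. Q y' \<le> Q y}"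

definition reconstructible :: "('y::finite \<Rightarrow> 'x \<Rightarrow> 'y set \<Rightarrow> real) \<Rightarrow> bool" where
  "reconstructible P \<longleftrightarrow>
     (\<forall>x Q1 Q2. is_distribution Q1 \<longrightarrow> is_distribution Q2 \<longrightarrow>
        (\<forall>s. (\<Sum>y\<in>UNIV. P y x s * Q1 y) = (\<Sum>y\<in>UNIV. P y x s * Q2 y)) \<longrightarrow>
        argmax_set Q1 = argmax_set Q2)"

definition pvec :: "('y::finite \<Rightarrow> 'x \<Rightarrow> 'y set \<Rightarrow> real) \<Rightarrow> 'y \<Rightarrow> 'x \<Rightarrow> real ^ ('y set)" where
  "pvec P i x = (\<chi> s. P i x s)"

text \<open>Linear independence of a finite family of vectors (repetitions count as dependence).\<close>
definition lin_indep_family :: "('i::finite \<Rightarrow> 'v::real_vector) \<Rightarrow> bool" where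
  "lin_indep_family v \<longleftrightarrow> (\<forall>a. (\<Sum>i\<in>UNIV. a i *\<^sub>R v i) = 0 \<longrightarrow> (\<forall>i. a i = 0))"

end

theory Submission
  imports Defs
begin

text \<open>If the vectors
  \<open>p\<^sub>i\<^sub>,\<^sub>x\<close> are independent, a mixture determines \<open>Q\<close> and hence its argmax. Conversely, a
  nonzero kernel vector \<open>a\<close> of the family has coordinate sum 0, because every \<open>p\<^sub>i\<^sub>,\<^sub>x\<close> is a
  probability vector; so a small multiple of \<open>a\<close> can be added to the uniform distribution,
  giving a second distribution with the same mixture. The uniform distribution has every label
  in its argmax, the perturbed one does not, since \<open>a\<close> is not constant.\<close>

lemma pvec_combination_component:
  fixes P :: "'y::finite \<Rightarrow> 'x \<Rightarrow> 'y set \<Rightarrow> real"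
  shows "(\<Sum>i\<in>UNIV. a i *\<^sub>R pvec P i x) $ s = (\<Sum>y\<in>UNIV. P y x s * a y)"
  by (simp add: pvec_def sum_component mult.commute)

lemma lin_indep_family_pvec_iff:
  fixes P :: "'y::finite \<Rightarrow> 'x \<Rightarrow> 'y set \<Rightarrow> real"
  shows "lin_indep_family (\<lambda>i. pvec P i x) \<longleftrightarrow>
     (\<forall>a. (\<forall>s. (\<Sum>y\<in>UNIV. P y x s * a y) = 0) \<longrightarrow> (\<forall>y. a y = 0))"
  unfolding lin_indep_family_def vec_eq_iff pvec_combination_component by simp

lemma argmax_set_affine:
  assumes "e > 0"
  shows "argmax_set (\<lambda>y. c + e * Q y) = argmax_set Q"
  using assms by (simp add: argmax_set_def)

lemma argmax_set_const: "argmax_set (\<lambda>_. c) = UNIV"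
  by (simp add: argmax_set_def)

lemma argmax_set_eq_UNIV_imp_const:
  assumes "argmax_set Q = UNIV"
  shows "Q y = Q y'"
  using assms unfolding argmax_set_def by (metis UNIV_I mem_Collect_eq order_antisym)

lemma const_sum_zero_imp_zero:
  fixes a :: "'a::finite \<Rightarrow> real"
  assumes "sum a UNIV = 0" and "\<And>y y'. a y = a y'"
  shows "a y = 0"
proof -
  have "a = (\<lambda>_. a y)"
    using assms(2) by blast
  then have "sum a UNIV = real CARD('a) * a y"
    by (metis sum_constant)
  then show ?thesis
    using assms(1) by simp
qed

lemma sum_eq_zero_if_stochastic_kernel:
  fixes p :: "'y::finite \<Rightarrow> 's::finite \<Rightarrow> real"
  assumes rows: "\<And>y. (\<Sum>s\<in>UNIV. p y s) = 1"
    and kernel: "\<And>s. (\<Sum>y\<in>UNIV. p y s * a y) = 0"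
  shows "(\<Sum>y\<in>UNIV. a y) = 0"
proof -
  have "(\<Sum>y\<in>UNIV. a y) = (\<Sum>y\<in>UNIV. \<Sum>s\<in>UNIV. p y s * a y)"
    by (simp add: rows flip: sum_distrib_right)
  also have "\<dots> = (\<Sum>s\<in>UNIV. \<Sum>y\<in>UNIV. p y s * a y)"
    by (rule sum.swap)
  finally show ?thesis
    by (simp add: kernel)
qed

lemma is_distribution_uniform_perturbation:
  fixes a :: "'a::finite \<Rightarrow> real"
  assumes "sum a UNIV = 0"
  obtains e where "e > 0" "is_distribution (\<lambda>y. 1 / real CARD('a) + e * a y)"
proof
  define c where "c = real CARD('a)"
  define M where "M = 1 + (\<Sum>y\<in>UNIV. \<bar>a y\<bar>)"
  define e where "e = 1 / (c * M)"
  have "c > 0" "M > 0"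
    unfolding c_def M_def by (auto intro: add_pos_nonneg sum_nonneg)
  then show "e > 0"
    unfolding e_def by simp
  have bound: "\<bar>e * a y\<bar> \<le> 1 / c" for y
  proof -
    have "\<bar>a y\<bar> \<le> M"
      unfolding M_def using member_le_sum[of y UNIV "\<lambda>y. \<bar>a y\<bar>"] by simp
    with \<open>e > 0\<close> have "\<bar>e * a y\<bar> \<le> e * M"
      by (simp add: abs_mult mult_left_mono)
    also have "\<dots> = 1 / c"
      unfolding e_def using \<open>M > 0\<close> by simp
    finally show ?thesis .
  qed
  have "0 \<le> 1 / c + e * a y" for y
    using bound[of y] by (simp add: abs_le_iff)
  moreover have "(\<Sum>y\<in>UNIV. 1 / c + e * a y) = 1"
    using \<open>c > 0\<close> assms by (simp add: sum.distrib c_def flip: sum_distrib_left)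
  ultimately show "is_distribution (\<lambda>y. 1 / real CARD('a) + e * a y)"
    unfolding is_distribution_def c_def by simp
qed

lemma lin_indep_imp_reconstructible:
  fixes P :: "'y::finite \<Rightarrow> 'x \<Rightarrow> 'y set \<Rightarrow> real"
  assumes "\<forall>x. lin_indep_family (\<lambda>i. pvec P i x)"
  shows "reconstructible P"
  unfolding reconstructible_def
proof (intro allI impI)
  fix x and Q1 Q2 :: "'y \<Rightarrow> real"
  assume "\<forall>s. (\<Sum>y\<in>UNIV. P y x s * Q1 y) = (\<Sum>y\<in>UNIV. P y x s * Q2 y)"
  then have diff: "(\<Sum>y\<in>UNIV. P y x s * (Q1 y - Q2 y)) = 0" for s
    by (simp add: right_diff_distrib sum_subtractf)
  have indep: "\<forall>a. (\<forall>s. (\<Sum>y\<in>UNIV. P y x s * a y) = 0) \<longrightarrow> (\<forall>y. a y = 0)"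
    using assms[rule_format, of x] unfolding lin_indep_family_pvec_iff .
  have "Q1 y - Q2 y = 0" for y
    using indep[rule_format, OF diff] .
  then have "Q1 = Q2"
    by auto
  then show "argmax_set Q1 = argmax_set Q2"
    by simp
qed

lemma reconstructible_imp_lin_indep:
  fixes P :: "'y::finite \<Rightarrow> 'x \<Rightarrow> 'y set \<Rightarrow> real"
  assumes bag: "bag_generation_process P" and rec: "reconstructible P"
  shows "lin_indep_family (\<lambda>i. pvec P i x)"
  unfolding lin_indep_family_pvec_iff
proof (intro allI impI)
  fix a :: "'y \<Rightarrow> real" and i
  assume kernel: "\<forall>s. (\<Sum>y\<in>UNIV. P y x s * a y) = 0"
  have "sum a UNIV = 0"
  proof (rule sum_eq_zero_if_stochastic_kernel)
    show "(\<Sum>s\<in>UNIV. P y x s) = 1" for y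
      using bag unfolding bag_generation_process_def is_distribution_def by blast
    show "(\<Sum>y\<in>UNIV. P y x s * a y) = 0" for s
      using kernel by blast
  qed
  then obtain e where "e > 0" and dist: "is_distribution (\<lambda>y. 1 / real CARD('y) + e * a y)"
    by (rule is_distribution_uniform_perturbation)
  let ?u = "1 / real CARD('y)"
  have "(\<Sum>y\<in>UNIV. P y x s * (?u + e * a y))
      = (\<Sum>y\<in>UNIV. P y x s * ?u) + e * (\<Sum>y\<in>UNIV. P y x s * a y)" for s
    by (simp add: distrib_left sum.distrib sum_distrib_left mult.left_commute)
  then have same_mixture:
    "(\<Sum>y\<in>UNIV. P y x s * (?u + e * a y)) = (\<Sum>y\<in>UNIV. P y x s * ?u)" for s
    using kernel by simp
  have uniform: "is_distribution (\<lambda>_::'y. ?u)"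
    by (simp add: is_distribution_def)
  have "argmax_set (\<lambda>y. ?u + e * a y) = argmax_set (\<lambda>_. ?u)"
    using rec[unfolded reconstructible_def, rule_format, OF dist uniform same_mixture] .
  then have "argmax_set a = UNIV"
    using \<open>e > 0\<close> by (simp add: argmax_set_affine argmax_set_const)
  then have "\<And>y y'. a y = a y'"
    by (rule argmax_set_eq_UNIV_imp_const)
  with \<open>sum a UNIV = 0\<close> show "a i = 0"
    by (rule const_sum_zero_imp_zero)
qed

theorem theorem1:
  fixes P :: "'y::finite \<Rightarrow> 'x \<Rightarrow> 'y set \<Rightarrow> real"
  assumes "bag_generation_process P"
  shows "reconstructible P \<longleftrightarrow> (\<forall>x. lin_indep_family (\<lambda>i. pvec P i x))"
proof
  show "\<forall>x. lin_indep_family (\<lambda>i. pvec P i x)" if "reconstructible P"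
    using reconstructible_imp_lin_indep[OF assms that] by blast
qed (rule lin_indep_imp_reconstructible)

end
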